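(* Consider a surviving Galton--Watson fractal model with initial set $J_0$ and contraction ratio $\rho$. If $r\ge \operatorname{diam}(J_0)\rho^n$, then $\operatorname{Fav}(S(r))\ge\operatorname{Fav}(S_n)$. If $0<r\le\varepsilon\rho^n$, then $\operatorname{Fav}(S(r))\le(1+O(\varepsilon))\operatorname{Fav}(S_n)$, where the implicit constant depends only on the model.
   Context: Galton--Watson (GW) fractal model: let $J_0\subset\mathbb{R}^2$ be a compact set equal to the closure of its interior, with finitely many connected components. Let $\mathfrak X=(\mathbf L;h_1(J_0),\dots,h_{\mathbf L}(J_0))$ be a random variable where $\mathbf L\in\{0,1,2,\dots\}$ is bounded, each $h_i$ is a homothety with contraction ratio $\rho\in(0,1)$ and $h_i(J_0)\subset J_0$, and $\mathbb{E}[\mathbf L]=\rho^{-1}$. Set $\mathcal{S}_0=\{J_0\}$, $S_0=J_0$; given $\mathcal{S}_n$, for each $R\in\mathcal{S}_n$ take an independent realization of $\mathfrak X$ and let $\mathcal{S}_{n+1}$ consist of the images $g_R(h^R_i(J_0))$ where $g_R$ is the homothety with $g_R(J_0)=R$; $S_{n+1}=\bigcup\mathcal{S}_{n+1}$, $S=\bigcap_nS_n$, and $S(r)$ is the $r$-neighbourhood of $S$. The model is surviving if $\mathbf L\ge1$ almost surely. $\operatorname{Fav}(A)=\int_0^\pi|\operatorname{proj}_\theta A|\,d\theta$ with $\operatorname{proj}_\theta(x)=\langle x,(-\sin\theta,\cos\theta)\rangle$. *)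

theory Defs
  imports "HOL-Analysis.Analysis" "HOL-Probability.Probability"
begin

text \<open>A configuration (one realization of the random variable X) is a list of
translation vectors b_1..b_L; the i-th homothety is h_i x = rho x + b_i.\<close>

definition homothety :: "real \<Rightarrow> real^2 \<Rightarrow> real^2 \<Rightarrow> real^2" where
  "homothety \<rho> b = (\<lambda>x. \<rho> *\<^sub>R x + b)"

text \<open>A realization of the whole Galton--Watson construction: to every node
(word) w an independent configuration X w is attached.  gw_cells rho X n is the
set of pairs (w, g_w) of level-n words and the homotheties g_w with g_w(J0)=R.\<close>

primrec gw_cells :: "real \<Rightarrow> (nat list \<Rightarrow> (real^2) list) \<Rightarrow> nat
    \<Rightarrow> (nat list \<times> (real^2 \<Rightarrow> real^2)) set" where
  "gw_cells \<rho> X 0 = {([], id)}"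
| "gw_cells \<rho> X (Suc n) =
     {(w @ [i], g \<circ> homothety \<rho> (X w ! i)) | w g i.
        (w, g) \<in> gw_cells \<rho> X n \<and> i < length (X w)}"

definition gw_Sn :: "(real^2) set \<Rightarrow> real \<Rightarrow> (nat list \<Rightarrow> (real^2) list) \<Rightarrow> nat \<Rightarrow> (real^2) set" where
  "gw_Sn J0 \<rho> X n = (\<Union>(w, g) \<in> gw_cells \<rho> X n. g ` J0)"

definition gw_S :: "(real^2) set \<Rightarrow> real \<Rightarrow> (nat list \<Rightarrow> (real^2) list) \<Rightarrow> (real^2) set" where
  "gw_S J0 \<rho> X = (\<Inter>n. gw_Sn J0 \<rho> X n)"

definition nbhd :: "(real^2) set \<Rightarrow> real \<Rightarrow> (real^2) set" where
  "nbhd A r = {x. \<exists>y\<in>A. dist x y \<le> r}"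

definition proj :: "real \<Rightarrow> real^2 \<Rightarrow> real" where
  "proj \<theta> x = x \<bullet> vector [- sin \<theta>, cos \<theta>]"

definition Fav :: "(real^2) set \<Rightarrow> real" where
  "Fav A = integral {0..pi} (\<lambda>\<theta>. measure lebesgue (proj \<theta> ` A))"

end

theory Submission
  imports Defs
begin

text \<open>
Every level-n cell is a copy \<open>g(J0)\<close> of \<open>J0\<close> under a homothety of ratio \<open>\<rho>^n\<close>, and, since
every node has a child, the cells descending from it form a nested sequence of nonempty
compact sets, so each cell meets \<open>S\<close>. Hence \<open>S\<^sub>n\<close> lies in the \<open>diam(J0) \<rho>^n\<close>-neighbourhood
of \<open>S\<close>, which gives the first inequality.

For the second, \<open>S \<subseteq> S\<^sub>n\<close>, so \<open>proj\<^sub>\<theta> S(r)\<close> lies in the r-neighbourhood of the compact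
set \<open>proj\<^sub>\<theta> S\<^sub>n\<close>. As \<open>J0\<close> is the closure of its interior and has finitely many components, all
components of \<open>J0\<close> contain balls of a common radius \<open>\<delta>\<close>; therefore \<open>proj\<^sub>\<theta> S\<^sub>n\<close> is a finite
union of intervals each of length at least \<open>L = 2 \<delta> \<rho>^n\<close>. Thickening such a set by r enlarges
each of its components by 2r, i.e. its measure by at most the factor \<open>1 + 2r/L\<close>. Integrating over
\<open>\<theta>\<close> gives the bound with \<open>C = 1/\<delta>\<close>.
\<close>

section \<open>Components of a regular closed set\<close>

lemma finite_components_UN_connected:
  assumes "finite I" "\<And>i. i \<in> I \<Longrightarrow> connected (U i)"
  shows "finite (components (\<Union>i\<in>I. U i))"
proof -
  define S where "S = (\<Union>i\<in>I. U i)"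
  have "components S \<subseteq> (\<lambda>i. connected_component_set S (SOME x. x \<in> U i)) ` I"
  proof
    fix C assume "C \<in> components S"
    then obtain x where x: "x \<in> S" "C = connected_component_set S x"
      by (auto simp: components_iff)
    then obtain i where i: "i \<in> I" "x \<in> U i"
      by (auto simp: S_def)
    then have "U i \<subseteq> C"
      unfolding x(2) using assms(2) by (intro connected_component_maximal) (auto simp: S_def)
    moreover have "(SOME x. x \<in> U i) \<in> U i"
      using i(2) by (rule someI)
    ultimately have "connected_component_set S (SOME x. x \<in> U i) = C"
      using x(2) connected_component_eq by blast
    then show "C \<in> (\<lambda>i. connected_component_set S (SOME x. x \<in> U i)) ` I"
      using i(1) by blast
  qed
  then show ?thesis
    unfolding S_def using assms(1) by (rule finite_subset[OF _ finite_imageI])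
qed

lemma component_contains_cball:
  fixes S :: "'a::real_normed_vector set"
  assumes "closed S" "closure (interior S) = S" "finite (components S)" "K \<in> components S"
  shows "\<exists>z e. 0 < e \<and> cball z e \<subseteq> K"
proof -
  define U where "U = - \<Union>(components S - {K})"
  have "open U"
    unfolding U_def using assms(1,3) closed_components by (intro open_Compl closed_Union) auto
  have "S \<inter> U \<subseteq> K"
  proof
    fix x assume "x \<in> S \<inter> U"
    then obtain C where "C \<in> components S" "x \<in> C"
      using Union_components[of S] by blast
    then show "x \<in> K"
      using \<open>x \<in> S \<inter> U\<close> by (auto simp: U_def)
  qed
  obtain x where "x \<in> K"
    using in_components_nonempty[OF assms(4)] by blast
  then have "x \<in> U"
    using components_nonoverlap[OF assms(4)] by (auto simp: U_def)
  moreover have "x \<in> closure (interior S)"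
    using assms(2) in_components_subset[OF assms(4)] \<open>x \<in> K\<close> by auto
  ultimately obtain z where "z \<in> U \<inter> interior S"
    using open_Int_closure_eq_empty[OF \<open>open U\<close>, of "interior S"] by blast
  then obtain e where "0 < e" "ball z e \<subseteq> U \<inter> interior S"
    using \<open>open U\<close> by (meson open_Int open_interior open_contains_ball)
  then have "cball z (e / 2) \<subseteq> K"
    using \<open>S \<inter> U \<subseteq> K\<close> interior_subset[of S] by (force simp: subset_eq)
  then show ?thesis
    using \<open>0 < e\<close> by (intro exI[of _ z] exI[of _ "e / 2"]) auto
qed

lemma uniform_cball_in_components:
  fixes S :: "'a::real_normed_vector set"
  assumes "closed S" "closure (interior S) = S" "finite (components S)"
  shows "\<exists>\<delta>>0. \<forall>K\<in>components S. \<exists>z. cball z \<delta> \<subseteq> K"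
proof -
  obtain e where e: "\<And>K. K \<in> components S \<Longrightarrow> 0 < e K \<and> (\<exists>z. cball z (e K) \<subseteq> K)"
    using component_contains_cball[OF assms] by metis
  define \<delta> where "\<delta> = Min (insert 1 (e ` components S))"
  have "0 < \<delta>"
    unfolding \<delta>_def using assms(3) e by (subst Min_gr_iff) auto
  moreover have "\<exists>z. cball z \<delta> \<subseteq> K" if "K \<in> components S" for K
  proof -
    have "\<delta> \<le> e K"
      unfolding \<delta>_def using assms(3) that by (intro Min_le) auto
    then show ?thesis
      using e[OF that] subset_cball by blast
  qed
  ultimately show ?thesis by blast
qed

section \<open>Thickening a finite union of intervals\<close>

lemma component_measure_ge:
  fixes A :: "real set"
  assumes "compact A" "C \<in> components A"
    and "\<And>t. t \<in> A \<Longrightarrow> \<exists>T p. connected T \<and> T \<subseteq> A \<and> t \<in> T \<and> {p..p + L} \<subseteq> T"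
  shows "L \<le> measure lebesgue C"
proof (cases "0 \<le> L")
  case True
  obtain t where "t \<in> C"
    using in_components_nonempty[OF assms(2)] by blast
  moreover obtain T p where T: "connected T" "T \<subseteq> A" "t \<in> T" "{p..p + L} \<subseteq> T"
    using assms(3) in_components_subset[OF assms(2)] \<open>t \<in> C\<close> by blast
  ultimately have "{p..p + L} \<subseteq> C"
    using components_maximal[OF assms(2) T(1,2)] by blast
  then have "measure lebesgue {p..p + L} \<le> measure lebesgue C"
    using compact_components[OF assms(1,2)]
    by (intro measure_mono_fmeasurable fmeasurableD lmeasurable_compact) auto
  then show ?thesis
    using True by simp
next
  case False
  then show ?thesis
    using measure_nonneg[of lebesgue C] by linarith
qed

lemma interval_thickening:
  fixes a b r :: real
  assumes "a \<le> b" "0 \<le> r"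
  shows "(\<Union>x\<in>{a..b}. cball x r) = {a - r..b + r}"
proof (intro set_eqI iffI)
  fix y assume "y \<in> {a - r..b + r}"
  then have "y \<in> cball (max a (min b y)) r" "max a (min b y) \<in> {a..b}"
    using assms by (auto simp: dist_real_def)
  then show "y \<in> (\<Union>x\<in>{a..b}. cball x r)"
    by blast
qed (auto simp: dist_real_def)

lemma measure_thickening_le:
  fixes A :: "real set"
  assumes A: "compact A" "finite (components A)"
    and "0 < L" "0 \<le> r" "\<And>C. C \<in> components A \<Longrightarrow> L \<le> measure lebesgue C"
  shows "measure lebesgue (\<Union>x\<in>A. cball x r) \<le> (1 + 2 * r / L) * measure lebesgue A"
proof -
  have C_thickening: "(\<Union>x\<in>C. cball x r) \<in> sets lebesgue \<and>
      measure lebesgue (\<Union>x\<in>C. cball x r) \<le> (1 + 2 * r / L) * measure lebesgue C"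
    if C: "C \<in> components A" for C
  proof -
    obtain a b where ab: "C = {a..b}" "a \<le> b"
      using C compact_components[OF A(1)] in_components_connected in_components_nonempty
      by (metis atLeastatMost_empty_iff connected_compact_interval_1 linorder_not_le)
    have "2 * r = 2 * r / L * L"
      using assms(3) by simp
    also have "\<dots> \<le> 2 * r / L * measure lebesgue C"
      using assms(3,4) assms(5)[OF C] by (intro mult_left_mono) auto
    finally have "2 * r \<le> 2 * r / L * measure lebesgue C" .
    then show ?thesis
      using ab assms(4) by (simp add: interval_thickening algebra_simps)
  qed
  have "measure lebesgue (\<Union>x\<in>A. cball x r)
      = measure lebesgue (\<Union>C\<in>components A. \<Union>x\<in>C. cball x r)"
    by (simp add: UN_UN_flatten[symmetric])
  also have "\<dots> \<le> (\<Sum>C\<in>components A. measure lebesgue (\<Union>x\<in>C. cball x r))"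
    using C_thickening by (intro measure_UNION_le A(2)) auto
  also have "\<dots> \<le> (\<Sum>C\<in>components A. (1 + 2 * r / L) * measure lebesgue C)"
    using C_thickening by (intro sum_mono) auto
  also have "\<dots> = (1 + 2 * r / L) * measure lebesgue (\<Union>(components A))"
    using pairwise_disjoint_components[of A] compact_components[OF A(1)]
    by (subst measure_Union') (auto simp: sum_distrib_left A(2) lmeasurable_compact disjnt_def pairwise_def)
  finally show ?thesis
    by simp
qed

section \<open>Projections and Favard length\<close>

lemma proj_altdef: "proj \<theta> x = cos \<theta> * x $ 2 - sin \<theta> * x $ 1"
  by (simp add: proj_def inner_vec_def sum_2)

lemma continuous_on_proj [continuous_intros]: "continuous_on A (proj \<theta>)"
  unfolding proj_altdef by (intro continuous_intros)

lemma norm_proj_direction: "norm (vector [- sin \<theta>, cos \<theta>] :: real^2) = 1"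
  by (simp add: norm_eq_sqrt_inner inner_vec_def sum_2 power2_eq_square[symmetric])

lemma proj_lipschitz: "\<bar>proj \<theta> x - proj \<theta> y\<bar> \<le> dist x y"
proof -
  have "\<bar>proj \<theta> (x - y)\<bar> \<le> norm (x - y)"
    using Cauchy_Schwarz_ineq2[of "x - y" "vector [- sin \<theta>, cos \<theta>]"]
    by (simp add: proj_def norm_proj_direction)
  then show ?thesis by (simp add: proj_def inner_diff_left dist_norm)
qed

lemma interval_subset_proj_cball:
  "{proj \<theta> z - e..proj \<theta> z + e} \<subseteq> proj \<theta> ` cball z e"
proof
  fix t assume t: "t \<in> {proj \<theta> z - e..proj \<theta> z + e}"
  define u :: "real^2" where "u = vector [- sin \<theta>, cos \<theta>]"
  have "proj \<theta> u = 1"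
    by (simp add: u_def proj_altdef power2_eq_square[symmetric])
  then have "proj \<theta> (z + (t - proj \<theta> z) *\<^sub>R u) = t"
    by (simp add: proj_def inner_add_left)
  moreover have "z + (t - proj \<theta> z) *\<^sub>R u \<in> cball z e"
    using t by (simp add: dist_norm u_def norm_proj_direction abs_le_iff)
  ultimately show "t \<in> proj \<theta> ` cball z e"
    by (metis image_eqI)
qed

lemma nbhd_eq_UN_cball: "nbhd S r = (\<Union>x\<in>S. cball x r)"
  by (auto simp: nbhd_def dist_commute)

lemma compact_nbhd: "compact S \<Longrightarrow> compact (nbhd S r)"
  unfolding nbhd_eq_UN_cball by (rule compact_minkowski_sum_cball)

lemma proj_nbhd_subset: "proj \<theta> ` nbhd S r \<subseteq> (\<Union>t\<in>proj \<theta> ` S. cball t r)"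
proof
  fix t assume "t \<in> proj \<theta> ` nbhd S r"
  then obtain x y where "t = proj \<theta> x" "y \<in> S" "dist x y \<le> r"
    by (auto simp: nbhd_def)
  then have "dist (proj \<theta> y) t \<le> r"
    using proj_lipschitz[of \<theta> x y] by (simp add: dist_real_def)
  then show "t \<in> (\<Union>t\<in>proj \<theta> ` S. cball t r)"
    using \<open>y \<in> S\<close> by auto
qed

lemma compact_proj_image: "compact K \<Longrightarrow> compact (proj \<theta> ` K)"
  by (intro compact_continuous_image continuous_on_proj)

lemma borel_measurable_measure_proj:
  assumes K: "compact K"
  shows "(\<lambda>\<theta>. measure lebesgue (proj \<theta> ` K)) \<in> borel_measurable (lebesgue_on {0..pi})"
proof -
  define Q where "Q = (\<lambda>(\<theta>, x). (\<theta>, proj \<theta> x)) ` ({0..pi} \<times> K)"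
  have "compact Q"
    unfolding Q_def proj_altdef case_prod_unfold
    by (intro compact_continuous_image continuous_intros compact_Times K) auto
  then have "Q \<in> sets (lborel \<Otimes>\<^sub>M lborel)"
    unfolding lborel_prod by (simp add: borel_compact)
  then have "(\<lambda>\<theta>. enn2real (emeasure lborel (Pair \<theta> -` Q))) \<in> borel_measurable lebesgue"
    by (intro measurable_completion borel_measurable_enn2real lborel.measurable_emeasure_Pair)
  moreover have "enn2real (emeasure lborel (Pair \<theta> -` Q)) = measure lebesgue (proj \<theta> ` K)"
    if "\<theta> \<in> {0..pi}" for \<theta>
  proof -
    have "Pair \<theta> -` Q = proj \<theta> ` K"
      using that by (auto simp: Q_def image_iff)
    then show ?thesis
      using compact_proj_image[OF K] by (simp add: measure_def borel_compact)
  qed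
  ultimately show ?thesis
    by (subst measurable_cong[where g = "\<lambda>\<theta>. enn2real (emeasure lborel (Pair \<theta> -` Q))"])
       (auto intro: measurable_restrict_space1)
qed

lemma measure_proj_le:
  assumes "compact K" "K \<subseteq> cball 0 R" "0 \<le> R"
  shows "measure lebesgue (proj \<theta> ` K) \<le> 2 * R"
proof -
  have "proj \<theta> ` K \<subseteq> {-R..R}"
  proof
    fix t assume "t \<in> proj \<theta> ` K"
    then obtain x where "x \<in> K" "t = proj \<theta> x" by blast
    moreover have "\<bar>proj \<theta> x\<bar> \<le> norm x"
      using proj_lipschitz[of \<theta> x 0] by (simp add: proj_def)
    ultimately show "t \<in> {-R..R}"
      using assms(2) by (auto simp: abs_le_iff)
  qed
  then have "measure lebesgue (proj \<theta> ` K) \<le> measure lebesgue {-R..R}"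
    by (intro measure_mono_fmeasurable compact_proj_image assms(1) fmeasurableD lmeasurable_compact) auto
  then show ?thesis
    using assms(3) by simp
qed

lemma integrable_measure_proj:
  assumes "compact K"
  shows "(\<lambda>\<theta>. measure lebesgue (proj \<theta> ` K)) integrable_on {0..pi}"
proof -
  obtain R where "0 < R" "\<forall>x\<in>K. norm x \<le> R"
    using compact_imp_bounded[OF assms] bounded_pos by blast
  then have "K \<subseteq> cball 0 R" "0 \<le> R"
    by auto
  then have "(\<lambda>\<theta>. measure lebesgue (proj \<theta> ` K)) absolutely_integrable_on {0..pi}"
    using assms measure_proj_le
    by (intro measurable_bounded_by_integrable_imp_absolutely_integrable
        [OF borel_measurable_measure_proj[OF assms], where g = "\<lambda>_. 2 * R"]) auto
  then show ?thesis
    by (simp add: absolutely_integrable_on_def)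
qed

lemma Fav_le_scaled:
  assumes "compact A" "compact B"
    and "\<And>\<theta>. \<theta> \<in> {0..pi} \<Longrightarrow> measure lebesgue (proj \<theta> ` A) \<le> c * measure lebesgue (proj \<theta> ` B)"
  shows "Fav A \<le> c * Fav B"
proof -
  have "Fav A \<le> integral {0..pi} (\<lambda>\<theta>. c * measure lebesgue (proj \<theta> ` B))"
    unfolding Fav_def
    using integrable_cmul[OF integrable_measure_proj[OF assms(2)], of c]
    by (intro integral_le integrable_measure_proj assms) simp_all
  then show ?thesis
    by (simp add: Fav_def)
qed

section \<open>Cells of a Galton--Watson realization\<close>

lemma continuous_on_homothety [continuous_intros]: "continuous_on A (homothety a c)"
  unfolding homothety_def by (intro continuous_intros)

lemma homothety_cball:
  assumes "0 < a" shows "homothety a c ` cball z e = cball (homothety a c z) (a * e)"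
proof -
  have "homothety a c ` cball z e = (+) c ` (\<lambda>x. a *\<^sub>R x) ` cball z e"
    unfolding homothety_def image_image by (simp add: add.commute)
  also have "\<dots> = (+) c ` cball (a *\<^sub>R z) (a * e)"
    using assms by (simp add: cball_scale)
  also have "\<dots> = cball (homothety a c z) (a * e)"
    by (simp add: homothety_def)
  finally show ?thesis .
qed

definition gw_surviving :: "(real^2) set \<Rightarrow> real \<Rightarrow> (nat list \<Rightarrow> (real^2) list) \<Rightarrow> bool" where
  "gw_surviving J0 \<rho> X \<longleftrightarrow>
     (\<forall>w. 1 \<le> length (X w) \<and> (\<forall>b\<in>set (X w). homothety \<rho> b ` J0 \<subseteq> J0))"

lemma gw_cells_homothety:
  "(w, g) \<in> gw_cells \<rho> X n \<Longrightarrow> \<exists>c. g = homothety (\<rho> ^ n) c"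
proof (induction n arbitrary: w g)
  case 0
  then show ?case by (auto simp: homothety_def fun_eq_iff intro!: exI[of _ 0])
next
  case (Suc n)
  then obtain v h i c where "g = h \<circ> homothety \<rho> (X v ! i)" "h = homothety (\<rho> ^ n) c"
    by force
  then show ?case
    by (auto simp: homothety_def fun_eq_iff algebra_simps intro!: exI[of _ "\<rho> ^ n *\<^sub>R X v ! i + c"])
qed

lemma finite_gw_cells: "finite (gw_cells \<rho> X n)"
proof (induction n)
  case (Suc n)
  have "gw_cells \<rho> X (Suc n) = (\<lambda>((w, g), i). (w @ [i], g \<circ> homothety \<rho> (X w ! i))) `
          (SIGMA p:gw_cells \<rho> X n. {..<length (X (fst p))})"
    by force
  then show ?case using Suc by simp
qed simp

lemma gw_cell_image_subset_gw_Sn: "(w, g) \<in> gw_cells \<rho> X n \<Longrightarrow> g ` J0 \<subseteq> gw_Sn J0 \<rho> X n"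
  unfolding gw_Sn_def by blast

lemma gw_Sn_Suc_subset:
  assumes "gw_surviving J0 \<rho> X" shows "gw_Sn J0 \<rho> X (Suc n) \<subseteq> gw_Sn J0 \<rho> X n"
proof
  fix x assume "x \<in> gw_Sn J0 \<rho> X (Suc n)"
  then obtain w g i where wg: "(w, g) \<in> gw_cells \<rho> X n" "i < length (X w)"
    and x: "x \<in> g ` homothety \<rho> (X w ! i) ` J0"
    by (auto simp: gw_Sn_def image_comp)
  have "homothety \<rho> (X w ! i) ` J0 \<subseteq> J0"
    using assms wg(2) nth_mem unfolding gw_surviving_def by blast
  then show "x \<in> gw_Sn J0 \<rho> X n"
    using x gw_cell_image_subset_gw_Sn[OF wg(1)] by blast
qed

lemma decseq_gw_Sn: "gw_surviving J0 \<rho> X \<Longrightarrow> decseq (gw_Sn J0 \<rho> X)"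
  by (rule decseq_SucI) (rule gw_Sn_Suc_subset)

lemma compact_gw_cell_image:
  assumes "compact J0" "(w, g) \<in> gw_cells \<rho> X n"
  shows "compact (g ` J0)"
  using gw_cells_homothety[OF assms(2)] assms(1)
  by (auto intro: compact_continuous_image continuous_on_homothety)

lemma compact_gw_Sn: "compact J0 \<Longrightarrow> compact (gw_Sn J0 \<rho> X n)"
  unfolding gw_Sn_def using finite_gw_cells compact_gw_cell_image by (auto intro!: compact_UN)

lemma gw_S_subset_gw_Sn: "gw_S J0 \<rho> X \<subseteq> gw_Sn J0 \<rho> X n"
  by (auto simp: gw_S_def)

lemma compact_gw_S:
  assumes "compact J0" shows "compact (gw_S J0 \<rho> X)"
proof -
  have "closed (gw_S J0 \<rho> X)"
    unfolding gw_S_def using assms by (simp add: closed_INT compact_imp_closed compact_gw_Sn)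
  with compact_gw_Sn[OF assms] have "compact (gw_Sn J0 \<rho> X 0 \<inter> gw_S J0 \<rho> X)"
    by (rule compact_Int_closed)
  then show ?thesis
    using gw_S_subset_gw_Sn by (metis Int_absorb1)
qed

lemma gw_cell_has_descendants:
  assumes "gw_surviving J0 \<rho> X" "(w, g) \<in> gw_cells \<rho> X n"
  shows "\<exists>w' g'. (w', g') \<in> gw_cells \<rho> X (n + m) \<and> g' ` J0 \<subseteq> g ` J0"
proof (induction m)
  case 0
  then show ?case using assms(2) by auto
next
  case (Suc m)
  then obtain w' g' where wg': "(w', g') \<in> gw_cells \<rho> X (n + m)" "g' ` J0 \<subseteq> g ` J0"
    by blast
  have len: "0 < length (X w')"
    using assms(1) unfolding gw_surviving_def by (metis Suc_le_eq One_nat_def)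
  then have "homothety \<rho> (X w' ! 0) ` J0 \<subseteq> J0"
    using assms(1) nth_mem unfolding gw_surviving_def by blast
  then have "(g' \<circ> homothety \<rho> (X w' ! 0)) ` J0 \<subseteq> g ` J0"
    using wg'(2) by (auto simp: image_comp[symmetric])
  moreover have "(w' @ [0], g' \<circ> homothety \<rho> (X w' ! 0)) \<in> gw_cells \<rho> X (n + Suc m)"
    using wg'(1) len by auto
  ultimately show ?case by blast
qed

lemma gw_cell_meets_gw_S:
  assumes "gw_surviving J0 \<rho> X" "compact J0" "J0 \<noteq> {}" "(w, g) \<in> gw_cells \<rho> X n"
  shows "g ` J0 \<inter> gw_S J0 \<rho> X \<noteq> {}"
proof -
  define F where "F m = g ` J0 \<inter> gw_Sn J0 \<rho> X m" for m
  have F_nonempty: "F m \<noteq> {}" for m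
  proof -
    obtain w' g' where wg': "(w', g') \<in> gw_cells \<rho> X (n + m)" "g' ` J0 \<subseteq> g ` J0"
      using gw_cell_has_descendants[OF assms(1,4)] by blast
    have "g' ` J0 \<subseteq> gw_Sn J0 \<rho> X (n + m)"
      by (rule gw_cell_image_subset_gw_Sn[OF wg'(1)])
    also have "\<dots> \<subseteq> gw_Sn J0 \<rho> X m"
      using decseq_gw_Sn[OF assms(1)] by (simp add: decseqD)
    finally show ?thesis
      using wg'(2) assms(3) unfolding F_def by blast
  qed
  have F_compact: "compact (F m)" for m
    unfolding F_def using compact_gw_cell_image[OF assms(2,4)] compact_gw_Sn[OF assms(2)]
    by (rule compact_Int)
  have "decseq F"
    using decseq_gw_Sn[OF assms(1)] by (auto simp: F_def decseq_def)
  then have "\<Inter>(range F) \<noteq> {}"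
    by (intro compact_nest F_compact F_nonempty) (rule decseqD)
  moreover have "\<Inter>(range F) = g ` J0 \<inter> gw_S J0 \<rho> X"
    by (auto simp: F_def gw_S_def)
  ultimately show ?thesis
    by simp
qed

lemma gw_Sn_subset_nbhd_gw_S:
  assumes "gw_surviving J0 \<rho> X" "compact J0" "0 < \<rho>" "diameter J0 * \<rho> ^ n \<le> r"
  shows "gw_Sn J0 \<rho> X n \<subseteq> nbhd (gw_S J0 \<rho> X) r"
proof
  fix x assume "x \<in> gw_Sn J0 \<rho> X n"
  then obtain w g y where wg: "(w, g) \<in> gw_cells \<rho> X n" and "y \<in> J0" "x = g y"
    by (auto simp: gw_Sn_def)
  then obtain y' where "y' \<in> J0" "g y' \<in> gw_S J0 \<rho> X"
    using gw_cell_meets_gw_S[OF assms(1,2) _ wg] by blast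
  obtain c where g: "g = homothety (\<rho> ^ n) c"
    using gw_cells_homothety[OF wg] by blast
  have "dist x (g y') = \<rho> ^ n * dist y y'"
    using assms(3) by (simp add: \<open>x = g y\<close> g homothety_def dist_norm scaleR_diff_right[symmetric])
  also have "\<dots> \<le> \<rho> ^ n * diameter J0"
    using assms(2,3) \<open>y \<in> J0\<close> \<open>y' \<in> J0\<close>
    by (intro mult_left_mono diameter_bounded_bound compact_imp_bounded) auto
  also have "\<dots> \<le> r"
    using assms(4) by (simp add: mult.commute)
  finally show "x \<in> nbhd (gw_S J0 \<rho> X) r"
    using \<open>g y' \<in> gw_S J0 \<rho> X\<close> unfolding nbhd_def by blast
qed

lemma proj_gw_Sn_eq_UN:
  "proj \<theta> ` gw_Sn J0 \<rho> X n = (\<Union>(p, K)\<in>gw_cells \<rho> X n \<times> components J0. proj \<theta> ` snd p ` K)"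
proof -
  have "gw_Sn J0 \<rho> X n = (\<Union>(p, K)\<in>gw_cells \<rho> X n \<times> components J0. snd p ` K)"
  proof (intro set_eqI iffI)
    fix x assume "x \<in> gw_Sn J0 \<rho> X n"
    then obtain p y where "p \<in> gw_cells \<rho> X n" "y \<in> J0" "x = snd p y"
      by (auto simp: gw_Sn_def)
    moreover obtain K where "K \<in> components J0" "y \<in> K"
      using Union_components[of J0] \<open>y \<in> J0\<close> by blast
    ultimately show "x \<in> (\<Union>(p, K)\<in>gw_cells \<rho> X n \<times> components J0. snd p ` K)"
      by blast
  next
    fix x assume "x \<in> (\<Union>(p, K)\<in>gw_cells \<rho> X n \<times> components J0. snd p ` K)"
    then obtain p K where "p \<in> gw_cells \<rho> X n" "K \<in> components J0" "x \<in> snd p ` K"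
      by blast
    then have "x \<in> snd p ` J0"
      using in_components_subset by blast
    then show "x \<in> gw_Sn J0 \<rho> X n"
      using \<open>p \<in> gw_cells \<rho> X n\<close> unfolding gw_Sn_def by (auto simp: case_prod_unfold)
  qed
  then show ?thesis
    by auto
qed

lemma connected_proj_cell_image:
  assumes "(w, g) \<in> gw_cells \<rho> X n" "connected K"
  shows "connected (proj \<theta> ` g ` K)"
  using gw_cells_homothety[OF assms(1)] assms(2)
  by (auto intro!: connected_continuous_image continuous_intros)

lemma finite_components_proj_gw_Sn:
  assumes "finite (components J0)"
  shows "finite (components (proj \<theta> ` gw_Sn J0 \<rho> X n))"
  unfolding proj_gw_Sn_eq_UN
proof (rule finite_components_UN_connected)
  show "finite (gw_cells \<rho> X n \<times> components J0)"
    using assms finite_gw_cells by blast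
  fix i assume "i \<in> gw_cells \<rho> X n \<times> components J0"
  then obtain w g K where "i = ((w, g), K)" "(w, g) \<in> gw_cells \<rho> X n" "K \<in> components J0"
    by auto
  then show "connected (case i of (p, K) \<Rightarrow> proj \<theta> ` snd p ` K)"
    by (simp add: connected_proj_cell_image in_components_connected)
qed

lemma component_proj_gw_Sn_measure_ge:
  assumes "compact J0" "0 < \<rho>" "\<forall>K\<in>components J0. \<exists>z. cball z \<delta> \<subseteq> K"
    and "C \<in> components (proj \<theta> ` gw_Sn J0 \<rho> X n)"
  shows "2 * \<rho> ^ n * \<delta> \<le> measure lebesgue C"
proof (rule component_measure_ge[OF compact_proj_image[OF compact_gw_Sn[OF assms(1)]] assms(4)])
  fix t assume "t \<in> proj \<theta> ` gw_Sn J0 \<rho> X n"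
  then obtain p K where p: "p \<in> gw_cells \<rho> X n" and K: "K \<in> components J0"
    and t: "t \<in> proj \<theta> ` snd p ` K"
    unfolding proj_gw_Sn_eq_UN by blast
  obtain w g where wg: "p = (w, g)" "(w, g) \<in> gw_cells \<rho> X n"
    using p by (cases p) blast
  obtain c where g: "g = homothety (\<rho> ^ n) c"
    using gw_cells_homothety[OF wg(2)] by blast
  obtain z where "cball z \<delta> \<subseteq> K"
    using assms(3) K by blast
  then have "cball (g z) (\<rho> ^ n * \<delta>) \<subseteq> g ` K"
    using assms(2) homothety_cball[of "\<rho> ^ n" c z \<delta>] unfolding g by (metis image_mono zero_less_power)
  define q where "q = proj \<theta> (g z) - \<rho> ^ n * \<delta>"
  have "{q..q + 2 * \<rho> ^ n * \<delta>} = {proj \<theta> (g z) - \<rho> ^ n * \<delta>..proj \<theta> (g z) + \<rho> ^ n * \<delta>}"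
    by (simp add: q_def)
  also have "\<dots> \<subseteq> proj \<theta> ` cball (g z) (\<rho> ^ n * \<delta>)"
    by (rule interval_subset_proj_cball)
  also have "\<dots> \<subseteq> proj \<theta> ` g ` K"
    using \<open>cball (g z) (\<rho> ^ n * \<delta>) \<subseteq> g ` K\<close> by (rule image_mono)
  finally have "{q..q + 2 * \<rho> ^ n * \<delta>} \<subseteq> proj \<theta> ` g ` K" .
  moreover have "proj \<theta> ` g ` K \<subseteq> proj \<theta> ` gw_Sn J0 \<rho> X n"
    using gw_cell_image_subset_gw_Sn[OF wg(2)] in_components_subset[OF K] by (intro image_mono) blast
  moreover have "connected (proj \<theta> ` g ` K)"
    using connected_proj_cell_image[OF wg(2) in_components_connected[OF K]] .
  ultimately show "\<exists>T q. connected T \<and> T \<subseteq> proj \<theta> ` gw_Sn J0 \<rho> X n \<and> t \<in> T \<and> {q..q + 2 * \<rho> ^ n * \<delta>} \<subseteq> T"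
    using t unfolding wg(1) by auto
qed

lemma measure_proj_nbhd_gw_S_le:
  assumes "compact J0" "finite (components J0)" "0 < \<rho>"
    and "0 < \<delta>" "\<forall>K\<in>components J0. \<exists>z. cball z \<delta> \<subseteq> K" "0 \<le> r"
  shows "measure lebesgue (proj \<theta> ` nbhd (gw_S J0 \<rho> X) r)
           \<le> (1 + r / (\<rho> ^ n * \<delta>)) * measure lebesgue (proj \<theta> ` gw_Sn J0 \<rho> X n)"
proof -
  let ?A = "proj \<theta> ` gw_Sn J0 \<rho> X n"
  have "proj \<theta> ` nbhd (gw_S J0 \<rho> X) r \<subseteq> (\<Union>t\<in>?A. cball t r)"
    using proj_nbhd_subset[of \<theta> "gw_S J0 \<rho> X" r] gw_S_subset_gw_Sn[of J0 \<rho> X n] by blast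
  then have "measure lebesgue (proj \<theta> ` nbhd (gw_S J0 \<rho> X) r) \<le> measure lebesgue (\<Union>t\<in>?A. cball t r)"
    using assms(1)
    by (intro measure_mono_fmeasurable lmeasurable_compact fmeasurableD compact_minkowski_sum_cball
        compact_proj_image compact_nbhd compact_gw_S compact_gw_Sn)
  also have "\<dots> \<le> (1 + 2 * r / (2 * \<rho> ^ n * \<delta>)) * measure lebesgue ?A"
    using assms component_proj_gw_Sn_measure_ge[OF assms(1,3,5)]
    by (intro measure_thickening_le compact_proj_image compact_gw_Sn finite_components_proj_gw_Sn) auto
  finally show ?thesis
    by simp
qed

lemma Fav_nbhd_gw_S_ge:
  assumes "gw_surviving J0 \<rho> X" "compact J0" "0 < \<rho>" "diameter J0 * \<rho> ^ n \<le> r"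
  shows "Fav (gw_Sn J0 \<rho> X n) \<le> Fav (nbhd (gw_S J0 \<rho> X) r)"
  using Fav_le_scaled[of _ _ 1] gw_Sn_subset_nbhd_gw_S[OF assms] assms(2)
  by (simp add: compact_gw_Sn compact_nbhd compact_gw_S measure_mono_fmeasurable
      lmeasurable_compact fmeasurableD compact_proj_image image_mono)

lemma Fav_nbhd_gw_S_le:
  assumes "compact J0" "finite (components J0)" "0 < \<rho>"
    and "0 < \<delta>" "\<forall>K\<in>components J0. \<exists>z. cball z \<delta> \<subseteq> K" "0 < r" "r \<le> \<epsilon> * \<rho> ^ n"
  shows "Fav (nbhd (gw_S J0 \<rho> X) r) \<le> (1 + \<epsilon> / \<delta>) * Fav (gw_Sn J0 \<rho> X n)"
proof (rule Fav_le_scaled)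
  fix \<theta>
  have "measure lebesgue (proj \<theta> ` nbhd (gw_S J0 \<rho> X) r)
      \<le> (1 + r / (\<rho> ^ n * \<delta>)) * measure lebesgue (proj \<theta> ` gw_Sn J0 \<rho> X n)"
    using assms(6) by (intro measure_proj_nbhd_gw_S_le[OF assms(1-5)]) simp
  also have "\<dots> \<le> (1 + \<epsilon> / \<delta>) * measure lebesgue (proj \<theta> ` gw_Sn J0 \<rho> X n)"
    using assms(3,4,7) by (intro mult_right_mono) (simp_all add: field_simps)
  finally show "measure lebesgue (proj \<theta> ` nbhd (gw_S J0 \<rho> X) r)
      \<le> (1 + \<epsilon> / \<delta>) * measure lebesgue (proj \<theta> ` gw_Sn J0 \<rho> X n)" .
qed (use assms(1) in \<open>simp_all add: compact_nbhd compact_gw_S compact_gw_Sn\<close>)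

theorem lemma3p2:
  fixes J0 :: "(real^2) set" and \<rho> :: real and P :: "(real^2) list measure"
  assumes J0_compact: "compact J0"
    and J0_reg: "closure (interior J0) = J0"
    and J0_comp: "finite (components J0)"
    and rho: "0 < \<rho>" "\<rho> < 1"
    and P_prob: "prob_space P"
    and L_meas: "(\<lambda>c. real (length c)) \<in> borel_measurable P"
    and L_bdd: "\<exists>M. AE c in P. length c \<le> M"
    and L_mean: "integral\<^sup>L P (\<lambda>c. real (length c)) = 1 / \<rho>"
    and maps_in: "AE c in P. \<forall>b\<in>set c. homothety \<rho> b ` J0 \<subseteq> J0"
    and surviving: "AE c in P. 1 \<le> length c"
  shows "\<exists>C>0. \<forall>X. (\<forall>w. 1 \<le> length (X w) \<and>
                        (\<forall>b\<in>set (X w). homothety \<rho> b ` J0 \<subseteq> J0)) \<longrightarrow>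
           (\<forall>n r. diameter J0 * \<rho> ^ n \<le> r \<longrightarrow>
                  Fav (nbhd (gw_S J0 \<rho> X) r) \<ge> Fav (gw_Sn J0 \<rho> X n)) \<and>
           (\<forall>n r \<epsilon>. 0 < r \<and> r \<le> \<epsilon> * \<rho> ^ n \<longrightarrow>
                  Fav (nbhd (gw_S J0 \<rho> X) r) \<le> (1 + C * \<epsilon>) * Fav (gw_Sn J0 \<rho> X n))"
proof -
  obtain \<delta> where \<delta>: "0 < \<delta>" "\<forall>K\<in>components J0. \<exists>z. cball z \<delta> \<subseteq> K"
    using uniform_cball_in_components[OF compact_imp_closed[OF J0_compact] J0_reg J0_comp] by blast
  show ?thesis
  proof (intro exI[of _ "1 / \<delta>"] conjI allI impI)
    show "0 < 1 / \<delta>"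
      using \<delta>(1) by simp
  next
    fix X :: "nat list \<Rightarrow> (real^2) list" and n r
    assume "\<forall>w. 1 \<le> length (X w) \<and> (\<forall>b\<in>set (X w). homothety \<rho> b ` J0 \<subseteq> J0)"
      and "diameter J0 * \<rho> ^ n \<le> r"
    then show "Fav (gw_Sn J0 \<rho> X n) \<le> Fav (nbhd (gw_S J0 \<rho> X) r)"
      using Fav_nbhd_gw_S_ge J0_compact rho(1) by (simp add: gw_surviving_def)
  next
    fix X :: "nat list \<Rightarrow> (real^2) list" and n r \<epsilon>
    assume "0 < r \<and> r \<le> \<epsilon> * \<rho> ^ n"
    then show "Fav (nbhd (gw_S J0 \<rho> X) r) \<le> (1 + 1 / \<delta> * \<epsilon>) * Fav (gw_Sn J0 \<rho> X n)"
      using Fav_nbhd_gw_S_le[OF J0_compact J0_comp rho(1) \<delta>] by simp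
  qed
qed

end
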